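(* Let $H_{9,4}$ be the graph on $72$ vertices obtained from the Cartesian product $K_9\square K_4$ (the line graph of $K_{9,4}$, with vertices $v_{i,j}$, $1\le i\le 9$, $1\le j\le 4$, where $v_{i,j}v_{i',j'}$ is an edge iff exactly one of $i=i'$, $j=j'$ holds) by attaching a pendant edge at each vertex, i.e. adding new vertices $w_{i,j}$ and edges $v_{i,j}w_{i,j}$. Then $H_{9,4}$ is perfect and $p(H_{9,4})=c(H_{9,4})=3$.
   Context: A graph $G$ is perfect if every induced subgraph $H$ satisfies $\omega(H)=\chi(H)$. A comparability graph is a graph admitting a transitive orientation. $p(G)$ is the minimum number $m$ such that $E(G)$ is the union of the edge sets of $m$ pairwise edge-disjoint comparability subgraphs of $G$; $c(G)$ is the minimum number of comparability subgraphs of $G$ (not necessarily edge-disjoint) whose edge sets cover $E(G)$. *)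

theory Defs
  imports Main
begin

text \<open>Finite simple graphs are given by a vertex set V and a set E of
  2-element subsets of V (undirected edges).\<close>

definition is_clique :: "'a set \<Rightarrow> 'a set set \<Rightarrow> 'a set \<Rightarrow> bool" where
  "is_clique V E K \<longleftrightarrow> K \<subseteq> V \<and> (\<forall>u\<in>K. \<forall>v\<in>K. u \<noteq> v \<longrightarrow> {u, v} \<in> E)"

definition clique_number :: "'a set \<Rightarrow> 'a set set \<Rightarrow> nat" where
  "clique_number V E = Max (card ` {K. is_clique V E K})"

definition proper_colouring :: "'a set \<Rightarrow> 'a set set \<Rightarrow> nat \<Rightarrow> ('a \<Rightarrow> nat) \<Rightarrow> bool" where
  "proper_colouring V E k f \<longleftrightarrow>
     (\<forall>v\<in>V. f v < k) \<and> (\<forall>u\<in>V. \<forall>v\<in>V. {u, v} \<in> E \<longrightarrow> f u \<noteq> f v)"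

definition chromatic_number :: "'a set \<Rightarrow> 'a set set \<Rightarrow> nat" where
  "chromatic_number V E = (LEAST k. \<exists>f. proper_colouring V E k f)"

definition induced_edges :: "'a set set \<Rightarrow> 'a set \<Rightarrow> 'a set set" where
  "induced_edges E S = {e \<in> E. e \<subseteq> S}"

definition perfect :: "'a set \<Rightarrow> 'a set set \<Rightarrow> bool" where
  "perfect V E \<longleftrightarrow> (\<forall>S\<subseteq>V. clique_number S (induced_edges E S)
                                = chromatic_number S (induced_edges E S))"

definition transitive_orientation :: "'a set set \<Rightarrow> ('a \<times> 'a) set \<Rightarrow> bool" where
  "transitive_orientation F R \<longleftrightarrow>
     (\<forall>(u, v)\<in>R. u \<noteq> v \<and> {u, v} \<in> F) \<and>
     (\<forall>e\<in>F. \<exists>u v. e = {u, v} \<and> u \<noteq> v \<and> ((u, v) \<in> R \<or> (v, u) \<in> R)) \<and>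
     (\<forall>u v. (u, v) \<in> R \<longrightarrow> (v, u) \<notin> R) \<and>
     trans R"

text \<open>A subgraph with edge set F is a comparability graph iff F admits a
  transitive orientation (isolated vertices are irrelevant).\<close>

definition comparability_edges :: "'a set set \<Rightarrow> bool" where
  "comparability_edges F \<longleftrightarrow> (\<exists>R. transitive_orientation F R)"

definition comp_partition_number :: "'a set set \<Rightarrow> nat" where
  "comp_partition_number E = (LEAST m. \<exists>Fs :: nat \<Rightarrow> 'a set set.
      (\<forall>i<m. Fs i \<subseteq> E \<and> comparability_edges (Fs i)) \<and>
      (\<Union>i<m. Fs i) = E \<and>
      (\<forall>i<m. \<forall>j<m. i \<noteq> j \<longrightarrow> Fs i \<inter> Fs j = {}))"

definition comp_cover_number :: "'a set set \<Rightarrow> nat" where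
  "comp_cover_number E = (LEAST m. \<exists>Fs :: nat \<Rightarrow> 'a set set.
      (\<forall>i<m. Fs i \<subseteq> E \<and> comparability_edges (Fs i)) \<and>
      (\<Union>i<m. Fs i) = E)"

text \<open>The graph H_{9,4}: vertex (i,j,False) is v_{i,j}, vertex (i,j,True) is w_{i,j}.\<close>

definition H94_V :: "(nat \<times> nat \<times> bool) set" where
  "H94_V = {(i, j, b). i \<in> {1..9} \<and> j \<in> {1..4}}"

definition H94_E :: "(nat \<times> nat \<times> bool) set set" where
  "H94_E =
     {{(i, j, False), (i', j', False)} | i j i' j'.
        i \<in> {1..9} \<and> j \<in> {1..4} \<and> i' \<in> {1..9} \<and> j' \<in> {1..4} \<and>
        ((i = i') \<noteq> (j = j'))}
   \<union> {{(i, j, False), (i, j, True)} | i j. i \<in> {1..9} \<and> j \<in> {1..4}}"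

end

theory Submission
  imports Defs
begin

text \<open>Without the pendant vertices, H is the line graph of K_{9,4}: the cells of a 9 x 4 grid,
  adjacent when they share a row or a column. An induced subgraph is the line graph of a bipartite
  graph, so by Koenig's edge colouring theorem it can be coloured with as many colours as its
  largest row or column, which is a clique; the pendant vertices then only need colours 0 and 1.

  The row edges, the column edges and the pendant edges are three edge-disjoint comparability
  graphs. Suppose two transitive orientations covered all edges. Every v(i,j) is a source or a sink
  in the class of its pendant edge. If v(i,j) is the middle of a directed path inside its column in
  some class, transitivity forbids row edges at v(i,j) in that class, so all its row edges lie in
  the pendant class and point uniformly away from or towards v(i,j): it is a row hub. A column has
  at most 4 vertices that are not such a middle, since the pairs recording whether they are entered
  from inside the column in either class must differ, and a row has at most 2 row hubs, since two
  hubs of a row point in opposite directions. So at most 16 + 18 < 36 grid vertices are accounted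
  for, a contradiction.\<close>

lemma clique_number_le_colours:
  assumes f: "proper_colouring S E k f"
  shows "clique_number S E \<le> k"
proof -
  have clique_le: "card K \<le> k" if "is_clique S E K" for K
  proof -
    have "inj_on f K"
      using that f unfolding is_clique_def proper_colouring_def by (meson inj_onI subsetD)
    moreover have "f ` K \<subseteq> {..<k}"
      using that f unfolding is_clique_def proper_colouring_def by auto
    ultimately show ?thesis using card_inj_on_le[of f K "{..<k}"] by simp
  qed
  then have "card ` {K. is_clique S E K} \<subseteq> {..k}" by auto
  moreover have "is_clique S E {}" unfolding is_clique_def by simp
  ultimately show ?thesis
    unfolding clique_number_def using clique_le by (intro Max.boundedI) (auto intro: finite_subset)
qed

lemma card_clique_le_clique_number:
  assumes "finite S" "is_clique S E K"
  shows "card K \<le> clique_number S E"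
proof -
  have "card ` {K. is_clique S E K} \<subseteq> card ` Pow S" unfolding is_clique_def by auto
  then have "finite (card ` {K. is_clique S E K})"
    using finite_subset \<open>finite S\<close> by blast
  then show ?thesis
    unfolding clique_number_def using assms(2) by (intro Max_ge) auto
qed

lemma chromatic_number_eq_clique_number:
  assumes "proper_colouring S E (clique_number S E) f"
  shows "chromatic_number S E = clique_number S E"
  unfolding chromatic_number_def using assms clique_number_le_colours
  by (intro Least_equality) auto

lemma transitive_orientation_orients:
  assumes "transitive_orientation F R" "{u, v} \<in> F"
  shows "(u, v) \<in> R \<or> (v, u) \<in> R"
proof -
  have "\<forall>e\<in>F. \<exists>a b. e = {a, b} \<and> a \<noteq> b \<and> ((a, b) \<in> R \<or> (b, a) \<in> R)"
    using assms(1) unfolding transitive_orientation_def by (elim conjE)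
  then obtain a b where "{u, v} = {a, b}" "(a, b) \<in> R \<or> (b, a) \<in> R"
    using assms(2) by blast
  then show ?thesis by (auto simp: doubleton_eq_iff)
qed

definition edges_of :: "('a \<times> 'a) set \<Rightarrow> 'a set set" where
  "edges_of R = {{u, v} | u v. (u, v) \<in> R}"

lemma doubleton_in_edges_of: "(u, v) \<in> R \<or> (v, u) \<in> R \<Longrightarrow> {u, v} \<in> edges_of R"
  unfolding edges_of_def by (auto simp: insert_commute)

lemma comparability_edges_of_order:
  assumes "\<And>u v. (u, v) \<in> R \<Longrightarrow> (v, u) \<notin> R" "trans R"
  shows "comparability_edges (edges_of R)"
  unfolding comparability_edges_def transitive_orientation_def edges_of_def
proof (intro exI[of _ R] conjI)
  show "\<forall>(u, v)\<in>R. u \<noteq> v \<and> {u, v} \<in> {{u, v} |u v. (u, v) \<in> R}"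
    using assms(1) by blast
qed (use assms in blast)+

lemma comp_numbers_eqI:
  fixes E :: "'a set set" and Fs :: "nat \<Rightarrow> 'a set set"
  assumes "\<forall>i<m. Fs i \<subseteq> E \<and> comparability_edges (Fs i)" "(\<Union>i<m. Fs i) = E"
    and "\<forall>i<m. \<forall>j<m. i \<noteq> j \<longrightarrow> Fs i \<inter> Fs j = {}"
    and no_cover: "\<And>n Gs. \<forall>i<n. Gs i \<subseteq> E \<and> comparability_edges (Gs i) \<Longrightarrow>
      (\<Union>i<n. Gs i) = E \<Longrightarrow> m \<le> n"
  shows "comp_partition_number E = m \<and> comp_cover_number E = m"
  unfolding comp_partition_number_def comp_cover_number_def
proof (intro conjI Least_equality)
  show "\<exists>Fs. (\<forall>i<m. Fs i \<subseteq> E \<and> comparability_edges (Fs i)) \<and> (\<Union>i<m. Fs i) = E \<and>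
      (\<forall>i<m. \<forall>j<m. i \<noteq> j \<longrightarrow> Fs i \<inter> Fs j = {})"
    using assms(1-3) by blast
  show "\<exists>Fs. (\<forall>i<m. Fs i \<subseteq> E \<and> comparability_edges (Fs i)) \<and> (\<Union>i<m. Fs i) = E"
    using assms(1-2) by blast
qed (use no_cover in blast)+


section \<open>Koenig's edge colouring theorem\<close>

text \<open>A cell (r, c) of S is an edge between row r and column c of a bipartite graph, and f is a
  proper edge colouring with colours below d.\<close>

definition bipartite_edge_colouring :: "('r \<times> 'c) set \<Rightarrow> nat \<Rightarrow> ('r \<times> 'c \<Rightarrow> nat) \<Rightarrow> bool" where
  "bipartite_edge_colouring S d f \<longleftrightarrow> (\<forall>p\<in>S. f p < d) \<and>
     (\<forall>r c c'. (r, c) \<in> S \<longrightarrow> (r, c') \<in> S \<longrightarrow> c \<noteq> c' \<longrightarrow> f (r, c) \<noteq> f (r, c')) \<and>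
     (\<forall>r r' c. (r, c) \<in> S \<longrightarrow> (r', c) \<in> S \<longrightarrow> r \<noteq> r' \<longrightarrow> f (r, c) \<noteq> f (r', c))"

lemma bipartite_edge_colouring_insert:
  assumes "bipartite_edge_colouring F d f" "(x, y) \<notin> F" "a < d"
    and "\<And>c. (x, c) \<in> F \<Longrightarrow> f (x, c) \<noteq> a" "\<And>r. (r, y) \<in> F \<Longrightarrow> f (r, y) \<noteq> a"
  shows "bipartite_edge_colouring (insert (x, y) F) d (f((x, y) := a))"
  using assms unfolding bipartite_edge_colouring_def by auto

lemma bipartite_edge_colouring_swap:
  assumes f: "bipartite_edge_colouring F d f" and "a < d" "b < d"
    and T: "\<And>p. p \<in> T \<Longrightarrow> p \<in> F \<and> (f p = a \<or> f p = b)"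
    and closed: "\<And>p q. p \<in> T \<Longrightarrow> q \<in> F \<Longrightarrow> fst p = fst q \<or> snd p = snd q \<Longrightarrow>
      f q = a \<or> f q = b \<Longrightarrow> q \<in> T"
  shows "bipartite_edge_colouring F d (\<lambda>p. if p \<in> T then (if f p = a then b else a) else f p)"
    (is "bipartite_edge_colouring F d ?g")
proof -
  have distinct: "?g p \<noteq> ?g q"
    if "p \<in> F" "q \<in> F" "fst p = fst q \<or> snd p = snd q" "f p \<noteq> f q" for p q
    using that T[of p] T[of q] closed[of p q] closed[of q p] by (cases "p \<in> T"; cases "q \<in> T") auto
  have "?g p < d" if "p \<in> F" for p
    using f that \<open>a < d\<close> \<open>b < d\<close> unfolding bipartite_edge_colouring_def by auto
  moreover have "?g (r, c) \<noteq> ?g (r, c')" if "(r, c) \<in> F" "(r, c') \<in> F" "c \<noteq> c'" for r c c'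
    using f that distinct[of "(r, c)" "(r, c')"] unfolding bipartite_edge_colouring_def by auto
  moreover have "?g (r, c) \<noteq> ?g (r', c)" if "(r, c) \<in> F" "(r', c) \<in> F" "r \<noteq> r'" for r r' c
    using f that distinct[of "(r, c)" "(r', c)"] unfolding bipartite_edge_colouring_def by auto
  ultimately show ?thesis
    unfolding bipartite_edge_colouring_def by blast
qed

inductive_set kempe_chain :: "('r \<times> 'c) set \<Rightarrow> ('r \<times> 'c \<Rightarrow> nat) \<Rightarrow> nat \<Rightarrow> nat \<Rightarrow> 'c \<Rightarrow> ('r \<times> 'c) set"
  for F f a b y where
  start: "(r, y) \<in> F \<Longrightarrow> f (r, y) = a \<Longrightarrow> (r, y) \<in> kempe_chain F f a b y"
| row_step: "(r, c) \<in> kempe_chain F f a b y \<Longrightarrow> f (r, c) = a \<Longrightarrow> (r, c') \<in> F \<Longrightarrow> f (r, c') = b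
    \<Longrightarrow> (r, c') \<in> kempe_chain F f a b y"
| column_step: "(r, c) \<in> kempe_chain F f a b y \<Longrightarrow> f (r, c) = b \<Longrightarrow> (r', c) \<in> F \<Longrightarrow> f (r', c) = a
    \<Longrightarrow> (r', c) \<in> kempe_chain F f a b y"

lemma kempe_chain_subset:
  "(r, c) \<in> kempe_chain F f a b y \<Longrightarrow> (r, c) \<in> F \<and> (f (r, c) = a \<or> f (r, c) = b)"
  by (induction rule: kempe_chain.induct) auto

lemma kempe_chain_row_has_a:
  "(r, c) \<in> kempe_chain F f a b y \<Longrightarrow> \<exists>c'. (r, c') \<in> kempe_chain F f a b y \<and> f (r, c') = a"
  by (induction rule: kempe_chain.induct) (auto intro: kempe_chain.intros)

lemma kempe_chain_column_has_b:
  "(r, c) \<in> kempe_chain F f a b y \<Longrightarrow> a \<noteq> b \<Longrightarrow> f (r, c) = a \<Longrightarrow>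
    c = y \<or> (\<exists>r'. (r', c) \<in> kempe_chain F f a b y \<and> f (r', c) = b)"
  by (induction rule: kempe_chain.induct) auto

lemma bipartite_edge_colouring_row_injD:
  "bipartite_edge_colouring F d f \<Longrightarrow> (r, c) \<in> F \<Longrightarrow> (r, c') \<in> F \<Longrightarrow> f (r, c) = f (r, c') \<Longrightarrow> c = c'"
  unfolding bipartite_edge_colouring_def by blast

lemma bipartite_edge_colouring_column_injD:
  "bipartite_edge_colouring F d f \<Longrightarrow> (r, c) \<in> F \<Longrightarrow> (r', c) \<in> F \<Longrightarrow> f (r, c) = f (r', c) \<Longrightarrow> r = r'"
  unfolding bipartite_edge_colouring_def by blast

lemma kempe_chain_row_closed:
  assumes f: "bipartite_edge_colouring F d f" and p: "(r, c) \<in> kempe_chain F f a b y"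
    and q: "(r, c') \<in> F" "f (r, c') = a \<or> f (r, c') = b"
  shows "(r, c') \<in> kempe_chain F f a b y"
proof -
  obtain c1 where c1: "(r, c1) \<in> kempe_chain F f a b y" "f (r, c1) = a"
    using kempe_chain_row_has_a[OF p] by blast
  show ?thesis
  proof (cases "f (r, c') = b")
    case True
    then show ?thesis using kempe_chain.row_step[OF c1] q(1) by blast
  next
    case False
    then have "c' = c1"
      using bipartite_edge_colouring_row_injD[OF f q(1)] kempe_chain_subset[OF c1(1)] c1(2) q(2)
      by simp
    then show ?thesis using c1 by simp
  qed
qed

lemma kempe_chain_column_closed:
  assumes f: "bipartite_edge_colouring F d f" and "a \<noteq> b"
    and no_b: "\<And>r. (r, y) \<in> F \<Longrightarrow> f (r, y) \<noteq> b"
    and p: "(r, c) \<in> kempe_chain F f a b y"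
    and q: "(r', c) \<in> F" "f (r', c) = a \<or> f (r', c) = b"
  shows "(r', c) \<in> kempe_chain F f a b y"
proof (cases "f (r, c) = f (r', c)")
  case True
  then have "r' = r"
    using bipartite_edge_colouring_column_injD[OF f q(1)] kempe_chain_subset[OF p] by simp
  then show ?thesis using p by simp
next
  case False
  show ?thesis
  proof (cases "f (r, c) = b")
    case True
    moreover have "f (r', c) = a" using True False q(2) by auto
    ultimately show ?thesis using kempe_chain.column_step[OF p] q(1) by blast
  next
    case not_b: False
    then have "f (r, c) = a" "f (r', c) = b" using kempe_chain_subset[OF p] False q(2) by auto
    then obtain r'' where r'': "(r'', c) \<in> kempe_chain F f a b y" "f (r'', c) = b"
      using kempe_chain_column_has_b[OF p \<open>a \<noteq> b\<close>] no_b q(1) by blast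
    then have "r'' = r'"
      using bipartite_edge_colouring_column_injD[OF f _ q(1)] kempe_chain_subset[OF r''(1)]
        \<open>f (r', c) = b\<close>
      by simp
    then show ?thesis using r'' by simp
  qed
qed

lemma kempe_chain_avoids_row:
  assumes "\<And>c. (x, c) \<in> F \<Longrightarrow> f (x, c) \<noteq> a"
  shows "(x, c) \<notin> kempe_chain F f a b y"
proof
  assume "(x, c) \<in> kempe_chain F f a b y"
  then obtain c' where "(x, c') \<in> kempe_chain F f a b y" "f (x, c') = a"
    using kempe_chain_row_has_a[of x c F f a b y] by blast
  then show False using kempe_chain_subset[of x c'] assms[of c'] by blast
qed

lemma kempe_chain_swap:
  assumes f: "bipartite_edge_colouring F d f" and "a < d" "b < d" "a \<noteq> b"
    and no_b: "\<And>r. (r, y) \<in> F \<Longrightarrow> f (r, y) \<noteq> b"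
  shows "bipartite_edge_colouring F d
    (\<lambda>p. if p \<in> kempe_chain F f a b y then (if f p = a then b else a) else f p)"
proof (rule bipartite_edge_colouring_swap[OF f \<open>a < d\<close> \<open>b < d\<close>])
  fix p assume "p \<in> kempe_chain F f a b y"
  then show "p \<in> F \<and> (f p = a \<or> f p = b)"
    using kempe_chain_subset[of "fst p" "snd p"] by simp
next
  fix p q assume "p \<in> kempe_chain F f a b y" "q \<in> F" "fst p = fst q \<or> snd p = snd q"
    "f q = a \<or> f q = b"
  then show "q \<in> kempe_chain F f a b y"
    using kempe_chain_row_closed[OF f, of "fst p" "snd p" a b y "snd q"]
      kempe_chain_column_closed[OF f \<open>a \<noteq> b\<close> no_b, of "fst p" "snd p" "fst q"]
    by (cases p; cases q) auto
qed

text \<open>Colour a is missing at row x and colour b at column y. Swapping a and b along the chain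
  from column y never touches row x, and afterwards a is missing at column y as well.\<close>

lemma bipartite_edge_colouring_extend:
  assumes f: "bipartite_edge_colouring F d f" and "(x, y) \<notin> F" and "a < d" "b < d"
    and no_a: "\<And>c. (x, c) \<in> F \<Longrightarrow> f (x, c) \<noteq> a"
    and no_b: "\<And>r. (r, y) \<in> F \<Longrightarrow> f (r, y) \<noteq> b"
  shows "\<exists>g. bipartite_edge_colouring (insert (x, y) F) d g"
proof (cases "a = b")
  case True
  then show ?thesis
    using bipartite_edge_colouring_insert[OF f \<open>(x, y) \<notin> F\<close> \<open>a < d\<close> no_a] no_b by blast
next
  case False
  let ?K = "kempe_chain F f a b y"
  define g where "g p = (if p \<in> ?K then (if f p = a then b else a) else f p)" for p
  have g: "bipartite_edge_colouring F d g"
    unfolding g_def using kempe_chain_swap[OF f \<open>a < d\<close> \<open>b < d\<close> False no_b] .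
  have row_x: "g (x, c) \<noteq> a" if "(x, c) \<in> F" for c
    using kempe_chain_avoids_row[of x F f a c b y] no_a that unfolding g_def by simp
  have col_y: "g (r, y) \<noteq> a" if "(r, y) \<in> F" for r
  proof (cases "(r, y) \<in> ?K")
    case True
    then have "f (r, y) = a" using kempe_chain_subset[OF True] no_b that by blast
    then show ?thesis using True False unfolding g_def by simp
  next
    case False
    then have "f (r, y) \<noteq> a" using kempe_chain.start[OF that] by blast
    then show ?thesis using False unfolding g_def by simp
  qed
  show ?thesis
    using bipartite_edge_colouring_insert[OF g \<open>(x, y) \<notin> F\<close> \<open>a < d\<close> row_x col_y] by blast
qed

lemma ex_less_notin_image:
  assumes "finite A" "card A < d"
  shows "\<exists>a<d. a \<notin> h ` A"
proof (rule ccontr)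
  assume "\<not> ?thesis"
  then have "{..<d} \<subseteq> h ` A" by auto
  then have "d \<le> card (h ` A)" using card_mono[OF finite_imageI[OF assms(1)]] by fastforce
  also have "\<dots> \<le> card A" using card_image_le[OF assms(1)] .
  finally show False using assms(2) by simp
qed

lemma finite_row_cells: "finite S \<Longrightarrow> finite {c. (r, c) \<in> S}"
  using finite_vimageI[of S "Pair r"] by (simp add: inj_on_def vimage_def)

lemma finite_column_cells: "finite S \<Longrightarrow> finite {r. (r, c) \<in> S}"
  using finite_vimageI[of S "\<lambda>r. (r, c)"] by (simp add: inj_on_def vimage_def)

theorem konig_edge_colouring:
  assumes "finite S" "\<And>r. card {c. (r, c) \<in> S} \<le> d" "\<And>c. card {r. (r, c) \<in> S} \<le> d"
  shows "\<exists>f. bipartite_edge_colouring S d f"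
  using assms
proof (induction S rule: finite_induct)
  case empty
  then show ?case unfolding bipartite_edge_colouring_def by simp
next
  case (insert p F)
  obtain x y where p: "p = (x, y)" by fastforce
  have "card {c. (r, c) \<in> F} \<le> card {c. (r, c) \<in> insert p F}" for r
    by (rule card_mono[OF finite_row_cells]) (use insert(1) in auto)
  moreover have "card {r. (r, c) \<in> F} \<le> card {r. (r, c) \<in> insert p F}" for c
    by (rule card_mono[OF finite_column_cells]) (use insert(1) in auto)
  ultimately obtain f where f: "bipartite_edge_colouring F d f"
    using insert(3-5) le_trans by blast
  have "{c. (x, c) \<in> insert p F} = insert y {c. (x, c) \<in> F}" "y \<notin> {c. (x, c) \<in> F}"
    using insert(2) unfolding p by auto
  then have "card {c. (x, c) \<in> F} < d"
    using insert(4)[of x] finite_row_cells[OF insert(1)] by simp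
  then obtain a where a: "a < d" "a \<notin> (\<lambda>c. f (x, c)) ` {c. (x, c) \<in> F}"
    using ex_less_notin_image finite_row_cells[OF insert(1)] by blast
  have "{r. (r, y) \<in> insert p F} = insert x {r. (r, y) \<in> F}" "x \<notin> {r. (r, y) \<in> F}"
    using insert(2) unfolding p by auto
  then have "card {r. (r, y) \<in> F} < d"
    using insert(5)[of y] finite_column_cells[OF insert(1)] by simp
  then obtain b where b: "b < d" "b \<notin> (\<lambda>r. f (r, y)) ` {r. (r, y) \<in> F}"
    using ex_less_notin_image finite_column_cells[OF insert(1)] by blast
  show ?case
    unfolding p using bipartite_edge_colouring_extend[OF f _ a(1) b(1)] insert(2) a(2) b(2) p by blast
qed

abbreviation vert :: "nat \<Rightarrow> nat \<Rightarrow> nat \<times> nat \<times> bool" where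
  "vert i j \<equiv> (i, j, False)"

abbreviation pend :: "nat \<Rightarrow> nat \<Rightarrow> nat \<times> nat \<times> bool" where
  "pend i j \<equiv> (i, j, True)"

fun H94_adj :: "nat \<times> nat \<times> bool \<Rightarrow> nat \<times> nat \<times> bool \<Rightarrow> bool" where
  "H94_adj (i, j, x) (i', j', y) \<longleftrightarrow>
     i \<in> {1..9} \<and> j \<in> {1..4} \<and> i' \<in> {1..9} \<and> j' \<in> {1..4} \<and>
     (\<not> x \<and> \<not> y \<and> (i = i') \<noteq> (j = j') \<or> i = i' \<and> j = j' \<and> x \<noteq> y)"

lemma doubleton_in_H94_E: "{p, q} \<in> H94_E \<longleftrightarrow> H94_adj p q"
proof
  assume "{p, q} \<in> H94_E"
  then show "H94_adj p q" unfolding H94_E_def by (auto simp: doubleton_eq_iff)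
next
  obtain i j x i' j' y where pq: "p = (i, j, x)" "q = (i', j', y)" by (cases p, cases q)
  assume "H94_adj p q"
  then have range: "i \<in> {1..9} \<and> j \<in> {1..4} \<and> i' \<in> {1..9} \<and> j' \<in> {1..4}"
    and "\<not> x \<and> \<not> y \<and> (i = i') \<noteq> (j = j') \<or> i = i' \<and> j = j' \<and> x \<noteq> y"
    unfolding pq by auto
  then consider "\<not> x \<and> \<not> y \<and> (i = i') \<noteq> (j = j')" | "i = i' \<and> j = j' \<and> x \<noteq> y" by blast
  then show "{p, q} \<in> H94_E"
  proof cases
    case 1
    then show ?thesis using range unfolding pq H94_E_def by blast
  next
    case 2
    then have "{p, q} = {vert i j, pend i j}" unfolding pq by (cases x) auto
    then show ?thesis using range unfolding H94_E_def by blast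
  qed
qed

lemma doubleton_in_induced_H94_E:
  "{p, q} \<in> induced_edges H94_E S \<longleftrightarrow> H94_adj p q \<and> p \<in> S \<and> q \<in> S"
  unfolding induced_edges_def by (simp add: doubleton_in_H94_E)

lemma H94_V_subset_grid: "H94_V \<subseteq> {1..9} \<times> {1..4} \<times> UNIV"
  unfolding H94_V_def by auto

lemma finite_subset_H94_V: "S \<subseteq> H94_V \<Longrightarrow> finite S"
  using finite_subset[OF subset_trans[OF _ H94_V_subset_grid]] by simp


section \<open>Perfectness\<close>

lemma H94_line_is_clique:
  assumes "S \<subseteq> H94_V" and "\<And>i j i' j'. P i j \<Longrightarrow> P i' j' \<Longrightarrow> i = i' \<or> j = j'"
  shows "is_clique S (induced_edges H94_E S) {vert i j | i j. vert i j \<in> S \<and> P i j}"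
  using assms H94_V_subset_grid
  unfolding is_clique_def doubleton_in_induced_H94_E by fastforce

lemma H94_grid_colouring:
  assumes SV: "S \<subseteq> H94_V"
  shows "\<exists>g. bipartite_edge_colouring {(i, j). vert i j \<in> S} (clique_number S (induced_edges H94_E S)) g"
proof -
  let ?\<omega> = "clique_number S (induced_edges H94_E S)"
  let ?C = "{(i, j). vert i j \<in> S}"
  have "finite S" using finite_subset_H94_V[OF SV] .
  have "card {j. (i, j) \<in> ?C} \<le> ?\<omega>" for i
  proof -
    have "{vert i' j | i' j. vert i' j \<in> S \<and> i' = i} = (\<lambda>j. vert i j) ` {j. (i, j) \<in> ?C}" by auto
    then show ?thesis
      using card_clique_le_clique_number[OF \<open>finite S\<close> H94_line_is_clique[OF SV, of "\<lambda>i' j. i' = i"]]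
        card_image[of "\<lambda>j. vert i j"]
      by (simp add: inj_on_def)
  qed
  moreover have "card {i. (i, j) \<in> ?C} \<le> ?\<omega>" for j
  proof -
    have "{vert i j' | i j'. vert i j' \<in> S \<and> j' = j} = (\<lambda>i. vert i j) ` {i. (i, j) \<in> ?C}" by auto
    then show ?thesis
      using card_clique_le_clique_number[OF \<open>finite S\<close> H94_line_is_clique[OF SV, of "\<lambda>i j'. j' = j"]]
        card_image[of "\<lambda>i. vert i j"]
      by (simp add: inj_on_def)
  qed
  moreover have "finite ?C"
    using SV H94_V_subset_grid finite_subset[of ?C "{1..9} \<times> {1..4}"] by blast
  ultimately show ?thesis using konig_edge_colouring by blast
qed

lemma H94_induced_colouring:
  assumes SV: "S \<subseteq> H94_V"
  defines "E \<equiv> induced_edges H94_E S"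
  shows "\<exists>f. proper_colouring S E (clique_number S E) f"
proof -
  let ?\<omega> = "clique_number S E"
  obtain g where g: "bipartite_edge_colouring {(i, j). vert i j \<in> S} ?\<omega> g"
    using H94_grid_colouring[OF SV] unfolding E_def by blast
  have "finite S" using finite_subset_H94_V[OF SV] .
  have one: "1 \<le> ?\<omega>" if "p \<in> S" for p
    using card_clique_le_clique_number[OF \<open>finite S\<close>, of E "{p}"] that unfolding is_clique_def by simp
  have two: "2 \<le> ?\<omega>" if "vert i j \<in> S" "pend i j \<in> S" for i j
    using card_clique_le_clique_number[OF \<open>finite S\<close>, of E "{vert i j, pend i j}"] that SV
    unfolding is_clique_def E_def doubleton_in_induced_H94_E H94_V_def
    by (auto simp: insert_commute)
  \<comment> \<open>a pendant vertex only has to avoid the colour of its unique neighbour\<close>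
  define f where "f p = (case p of (i, j, x) \<Rightarrow>
      if x then (if vert i j \<in> S \<and> g (i, j) = 0 then 1 else 0) else g (i, j))" for p
  have "f p < ?\<omega>" if pS: "p \<in> S" for p
  proof -
    obtain i j x where p: "p = (i, j, x)" by (cases p)
    show ?thesis
    proof (cases x)
      case True
      then show ?thesis using one[OF pS] two[of i j] pS unfolding p f_def by auto
    next
      case False
      then show ?thesis using g pS unfolding p f_def bipartite_edge_colouring_def by simp
    qed
  qed
  moreover have "f p \<noteq> f q" if pqS: "p \<in> S" "q \<in> S" and adj: "H94_adj p q" for p q
  proof -
    obtain i j x i' j' y where p: "p = (i, j, x)" and q: "q = (i', j', y)" by (cases p, cases q)
    consider "\<not> x" "\<not> y" "(i = i') \<noteq> (j = j')" | "i = i'" "j = j'" "x \<noteq> y"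
      using adj unfolding p q by auto
    then show ?thesis
    proof cases
      case 1
      then show ?thesis using g pqS unfolding p q f_def bipartite_edge_colouring_def by auto
    next
      case 2
      then show ?thesis using pqS unfolding p q f_def by (cases x) auto
    qed
  qed
  ultimately have "proper_colouring S E ?\<omega> f"
    unfolding proper_colouring_def E_def doubleton_in_induced_H94_E by blast
  then show ?thesis by blast
qed

lemma perfect_H94: "perfect H94_V H94_E"
  unfolding perfect_def
  using H94_induced_colouring chromatic_number_eq_clique_number by metis


section \<open>No cover by two comparability graphs\<close>

text \<open>The two classes of a cover by transitive orientations are indexed by bool, so the class other
  than R k is R (\<not> k).\<close>

locale H94_two_orientations =
  fixes R :: "bool \<Rightarrow> ((nat \<times> nat \<times> bool) \<times> (nat \<times> nat \<times> bool)) set"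
  assumes oriented_adj: "(p, q) \<in> R k \<Longrightarrow> H94_adj p q"
    and adj_oriented: "H94_adj p q \<Longrightarrow> \<exists>k. (p, q) \<in> R k \<or> (q, p) \<in> R k"
    and asym: "(p, q) \<in> R k \<Longrightarrow> (q, p) \<notin> R k"
    and transitive: "(p, q) \<in> R k \<Longrightarrow> (q, r) \<in> R k \<Longrightarrow> (p, r) \<in> R k"
begin

definition column_transit :: "bool \<Rightarrow> nat \<Rightarrow> nat \<Rightarrow> bool" where
  "column_transit k i j \<longleftrightarrow> (\<exists>i1 i2. (vert i1 j, vert i j) \<in> R k \<and> (vert i j, vert i2 j) \<in> R k)"

definition row_hub :: "bool \<Rightarrow> bool \<Rightarrow> nat \<Rightarrow> nat \<Rightarrow> bool" where
  "row_hub k s i j \<longleftrightarrow>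
     (\<forall>j'\<in>{1..4}. j' \<noteq> j \<longrightarrow>
        (if s then (vert i j, vert i j') \<in> R k else (vert i j', vert i j) \<in> R k)) \<and>
     (\<forall>j'. (vert i j, vert i j') \<notin> R (\<not> k) \<and> (vert i j', vert i j) \<notin> R (\<not> k))"

lemma source_or_sink_in_some_class:
  assumes "i \<in> {1..9}" "j \<in> {1..4}"
  shows "\<exists>k. (\<forall>p. (p, vert i j) \<notin> R k) \<or> (\<forall>p. (vert i j, p) \<notin> R k)"
proof -
  have only_neighbour: "p = vert i j" if "H94_adj p (pend i j) \<or> H94_adj (pend i j) p" for p
    using that by (cases p) auto
  obtain k where "(vert i j, pend i j) \<in> R k \<or> (pend i j, vert i j) \<in> R k"
    using adj_oriented[of "vert i j" "pend i j"] assms by auto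
  then have "(\<forall>p. (p, vert i j) \<notin> R k) \<or> (\<forall>p. (vert i j, p) \<notin> R k)"
    using transitive only_neighbour oriented_adj asym by metis
  then show ?thesis by blast
qed

lemma column_transit_no_row_edge:
  assumes "column_transit k i j"
  shows "(vert i j, vert i j') \<notin> R k \<and> (vert i j', vert i j) \<notin> R k"
proof -
  obtain i1 i2 where into: "(vert i1 j, vert i j) \<in> R k" and out_of: "(vert i j, vert i2 j) \<in> R k"
    using assms unfolding column_transit_def by blast
  have "i1 \<noteq> i" "i2 \<noteq> i" using oriented_adj[OF into] oriented_adj[OF out_of] by auto
  \<comment> \<open>transitivity would join v(i1,j) or v(i2,j) to a vertex in another row and column\<close>
  show ?thesis
  proof (intro conjI notI)
    assume row: "(vert i j, vert i j') \<in> R k"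
    have "j \<noteq> j'" using oriented_adj[OF row] by auto
    then show False using oriented_adj[OF transitive[OF into row]] \<open>i1 \<noteq> i\<close> by simp
  next
    assume row: "(vert i j', vert i j) \<in> R k"
    have "j \<noteq> j'" using oriented_adj[OF row] by auto
    then show False using oriented_adj[OF transitive[OF row out_of]] \<open>i2 \<noteq> i\<close> by simp
  qed
qed

lemma column_transit_imp_row_hub:
  assumes ij: "i \<in> {1..9}" "j \<in> {1..4}" and transit: "column_transit k' i j"
  shows "\<exists>k s. row_hub k s i j"
proof -
  obtain k where k: "(\<forall>p. (p, vert i j) \<notin> R k) \<or> (\<forall>p. (vert i j, p) \<notin> R k)"
    using source_or_sink_in_some_class[OF ij] by blast
  moreover have "\<exists>i1 i2. (vert i1 j, vert i j) \<in> R k' \<and> (vert i j, vert i2 j) \<in> R k'"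
    using transit unfolding column_transit_def .
  ultimately have "k' = (\<not> k)" by (cases k; cases k') auto
  note no_row_edge = column_transit_no_row_edge[OF transit]
  define s where "s \<longleftrightarrow> (\<forall>p. (p, vert i j) \<notin> R k)"
  have "row_hub k s i j"
    unfolding row_hub_def
  proof (intro conjI ballI impI allI)
    fix j' assume j': "j' \<in> {1..4}" "j' \<noteq> j"
    then obtain k'' where "(vert i j, vert i j') \<in> R k'' \<or> (vert i j', vert i j) \<in> R k''"
      using adj_oriented[of "vert i j" "vert i j'"] ij by auto
    moreover have "k'' = k" using calculation no_row_edge[of j'] \<open>k' = (\<not> k)\<close> by (cases k''; cases k) auto
    ultimately show "if s then (vert i j, vert i j') \<in> R k else (vert i j', vert i j) \<in> R k"
      using k unfolding s_def by auto
  qed (use no_row_edge \<open>k' = (\<not> k)\<close> in auto)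
  then show ?thesis by blast
qed

lemma card_non_transit_le:
  assumes "j \<in> {1..4}"
  shows "card {i \<in> {1..9}. \<forall>k. \<not> column_transit k i j} \<le> 4"
proof -
  let ?X = "{i \<in> {1..9}. \<forall>k. \<not> column_transit k i j}"
  define entered where "entered k i \<longleftrightarrow> (\<exists>i'. (vert i' j, vert i j) \<in> R k)" for k i
  \<comment> \<open>an edge from v(i,j) to v(i',j) in class k makes i' entered and, if i were entered too, i transit\<close>
  have "inj_on (\<lambda>i. (entered True i, entered False i)) ?X"
  proof (rule inj_onI, rule ccontr)
    fix i i' assume i: "i \<in> ?X" and i': "i' \<in> ?X" and "i \<noteq> i'"
      and same: "(entered True i, entered False i) = (entered True i', entered False i')"
    then have same_k: "entered k i = entered k i'" for k by (cases k) auto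
    obtain k where "(vert i j, vert i' j) \<in> R k \<or> (vert i' j, vert i j) \<in> R k"
      using adj_oriented[of "vert i j" "vert i' j"] i i' \<open>i \<noteq> i'\<close> assms by auto
    then show False
      using same_k[of k] i i' unfolding entered_def column_transit_def by blast
  qed
  then have "card ?X \<le> card (UNIV :: (bool \<times> bool) set)"
    by (rule card_inj_on_le) auto
  then show ?thesis by (simp add: UNIV_Times_UNIV[symmetric] card_UNIV_bool del: UNIV_Times_UNIV)
qed

lemma row_hubs_opposite:
  assumes "j \<in> {1..4}" "j' \<in> {1..4}" "j \<noteq> j'" and hub: "row_hub k s i j" and hub': "row_hub k' s' i j'"
  shows "s \<noteq> s'"
proof -
  have edge: "if s then (vert i j, vert i j') \<in> R k else (vert i j', vert i j) \<in> R k"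
    using hub assms(2,3) unfolding row_hub_def by auto
  have edge': "if s' then (vert i j', vert i j) \<in> R k' else (vert i j, vert i j') \<in> R k'"
    using hub' assms(1,3) unfolding row_hub_def by auto
  have "(vert i j', vert i j) \<notin> R (\<not> k') \<and> (vert i j, vert i j') \<notin> R (\<not> k')"
    using hub' unfolding row_hub_def by blast
  then have "k = k'" using edge by (cases k; cases k'; cases s) auto
  then show ?thesis using edge edge' asym by (cases s; cases s') auto
qed

lemma card_row_hubs_le: "card {j \<in> {1..4}. \<exists>k s. row_hub k s i j} \<le> 2"
proof -
  let ?Y = "{j \<in> {1..4}. \<exists>k s. row_hub k s i j}"
  have "inj_on (\<lambda>j. SOME s. \<exists>k. row_hub k s i j) ?Y"
  proof (rule inj_onI, rule ccontr)
    fix j j' assume "j \<in> ?Y" "j' \<in> ?Y" "j \<noteq> j'"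
      and same: "(SOME s. \<exists>k. row_hub k s i j) = (SOME s. \<exists>k. row_hub k s i j')"
    then obtain k k' where "row_hub k (SOME s. \<exists>k. row_hub k s i j) i j"
      "row_hub k' (SOME s. \<exists>k. row_hub k s i j') i j'"
      using someI_ex[of "\<lambda>s. \<exists>k. row_hub k s i j"] someI_ex[of "\<lambda>s. \<exists>k. row_hub k s i j'"]
      by blast
    then show False using row_hubs_opposite same \<open>j \<in> ?Y\<close> \<open>j' \<in> ?Y\<close> \<open>j \<noteq> j'\<close> by blast
  qed
  then have "card ?Y \<le> card (UNIV :: bool set)"
    by (rule card_inj_on_le) auto
  then show ?thesis by (simp add: card_UNIV_bool)
qed

lemma inconsistent: False
proof -
  let ?grid = "{1..9::nat} \<times> {1..4::nat}"
  define A where "A = (SIGMA j:{1..4::nat}. {i \<in> {1..9::nat}. \<forall>k. \<not> column_transit k i j})"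
  define B where "B = (SIGMA i:{1..9::nat}. {j \<in> {1..4::nat}. \<exists>k s. row_hub k s i j})"
  have "finite (prod.swap ` A \<union> B)" unfolding A_def B_def by auto
  moreover have "?grid \<subseteq> prod.swap ` A \<union> B"
    unfolding A_def B_def using column_transit_imp_row_hub by fastforce
  ultimately have "card ?grid \<le> card (prod.swap ` A \<union> B)" by (rule card_mono)
  also have "\<dots> \<le> card (prod.swap ` A) + card B" by (rule card_Un_le)
  also have "\<dots> \<le> card A + card B" using card_image_le[of A prod.swap] unfolding A_def by simp
  also have "card A \<le> 4 * 4"
  proof -
    have "card A = (\<Sum>j\<in>{1..4::nat}. card {i \<in> {1..9::nat}. \<forall>k. \<not> column_transit k i j})"
      unfolding A_def by (rule card_SigmaI) auto
    also have "\<dots> \<le> of_nat (card {1..4::nat}) * 4"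
      by (rule sum_bounded_above) (rule card_non_transit_le)
    finally show ?thesis by simp
  qed
  also have "card B \<le> 9 * 2"
  proof -
    have "card B = (\<Sum>i\<in>{1..9::nat}. card {j \<in> {1..4::nat}. \<exists>k s. row_hub k s i j})"
      unfolding B_def by (rule card_SigmaI) auto
    also have "\<dots> \<le> of_nat (card {1..9::nat}) * 2"
      by (rule sum_bounded_above) (rule card_row_hubs_le)
    finally show ?thesis by simp
  qed
  finally show False by simp
qed

end

lemma H94_E_not_union_of_two_comparability:
  assumes "comparability_edges F1" "comparability_edges F2"
  shows "F1 \<union> F2 \<noteq> H94_E"
proof
  assume E: "F1 \<union> F2 = H94_E"
  obtain R1 R2 where "transitive_orientation F1 R1" "transitive_orientation F2 R2"
    using assms unfolding comparability_edges_def by blast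
  define F where "F k = (if k then F1 else F2)" for k
  define R where "R k = (if k then R1 else R2)" for k
  have R: "transitive_orientation (F k) (R k)" for k
    using \<open>transitive_orientation F1 R1\<close> \<open>transitive_orientation F2 R2\<close>
    unfolding F_def R_def by simp
  have "H94_two_orientations R"
  proof
    fix p q k assume "(p, q) \<in> R k"
    then have "{p, q} \<in> F k" using R[of k] unfolding transitive_orientation_def by blast
    then have "{p, q} \<in> H94_E" using E unfolding F_def by (auto split: if_splits)
    then show "H94_adj p q" by (rule doubleton_in_H94_E[THEN iffD1])
  next
    fix p q assume "H94_adj p q"
    then have "{p, q} \<in> F1 \<union> F2" using E doubleton_in_H94_E[of p q] by simp
    then have "{p, q} \<in> F True \<or> {p, q} \<in> F False" unfolding F_def by simp
    then show "\<exists>k. (p, q) \<in> R k \<or> (q, p) \<in> R k"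
      using transitive_orientation_orients[OF R] by blast
  next
    fix p q k assume "(p, q) \<in> R k"
    then show "(q, p) \<notin> R k" using R[of k] unfolding transitive_orientation_def by blast
  next
    fix p q r k assume "(p, q) \<in> R k" "(q, r) \<in> R k"
    then show "(p, r) \<in> R k" using R[of k] unfolding transitive_orientation_def by (meson transD)
  qed
  then show False by (rule H94_two_orientations.inconsistent)
qed

lemma H94_no_small_comparability_cover:
  fixes Gs :: "nat \<Rightarrow> (nat \<times> nat \<times> bool) set set"
  assumes "\<forall>i<n. Gs i \<subseteq> H94_E \<and> comparability_edges (Gs i)" "(\<Union>i<n. Gs i) = H94_E"
  shows "3 \<le> n"
proof (rule ccontr)
  assume "\<not> 3 \<le> n"
  define G where "G i = (if i < n then Gs i else {})" for i
  have "comparability_edges (G i)" for i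
    using assms(1) comparability_edges_of_order[of "{}"] unfolding G_def edges_of_def by auto
  moreover have "G 0 \<union> G 1 = H94_E"
  proof -
    have "{..<n} \<subseteq> {0, 1}" using \<open>\<not> 3 \<le> n\<close> by auto
    then have "(\<Union>i<n. Gs i) = G 0 \<union> G 1" unfolding G_def by (auto simp: less_Suc_eq)
    then show ?thesis using assms(2) by simp
  qed
  ultimately show False using H94_E_not_union_of_two_comparability by blast
qed

section \<open>A partition into three comparability graphs\<close>

definition H94_row_order :: "((nat \<times> nat \<times> bool) \<times> (nat \<times> nat \<times> bool)) set" where
  "H94_row_order = {(vert i j, vert i j') | i j j'. i \<in> {1..9} \<and> j \<in> {1..4} \<and> j' \<in> {1..4} \<and> j < j'}"

definition H94_column_order :: "((nat \<times> nat \<times> bool) \<times> (nat \<times> nat \<times> bool)) set" where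
  "H94_column_order = {(vert i j, vert i' j) | i i' j. i \<in> {1..9} \<and> i' \<in> {1..9} \<and> j \<in> {1..4} \<and> i < i'}"

definition H94_pendant_order :: "((nat \<times> nat \<times> bool) \<times> (nat \<times> nat \<times> bool)) set" where
  "H94_pendant_order = {(vert i j, pend i j) | i j. i \<in> {1..9} \<and> j \<in> {1..4}}"

lemma comparability_edges_H94_orders:
  "comparability_edges (edges_of H94_row_order)"
  "comparability_edges (edges_of H94_column_order)"
  "comparability_edges (edges_of H94_pendant_order)"
  by (intro comparability_edges_of_order;
      auto simp: H94_row_order_def H94_column_order_def H94_pendant_order_def trans_def)+

lemma H94_E_eq_edges_of_orders:
  "H94_E = edges_of H94_row_order \<union> edges_of H94_column_order \<union> edges_of H94_pendant_order"
proof (intro equalityI subsetI)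
  fix e assume "e \<in> H94_E"
  then consider
    (grid) i j i' j' where "e = {vert i j, vert i' j'}" "i \<in> {1..9}" "j \<in> {1..4}" "i' \<in> {1..9}"
      "j' \<in> {1..4}" "(i = i') \<noteq> (j = j')"
  | (pendant) i j where "e = {vert i j, pend i j}" "i \<in> {1..9}" "j \<in> {1..4}"
    unfolding H94_E_def by blast
  then show "e \<in> edges_of H94_row_order \<union> edges_of H94_column_order \<union> edges_of H94_pendant_order"
  proof cases
    case grid
    then consider "i = i'" "j \<noteq> j'" | "j = j'" "i \<noteq> i'" by blast
    then show ?thesis
    proof cases
      case 1
      then have "(vert i j, vert i' j') \<in> H94_row_order \<or> (vert i' j', vert i j) \<in> H94_row_order"
        using grid unfolding H94_row_order_def by (auto simp: neq_iff)
      then have "e \<in> edges_of H94_row_order" unfolding grid(1) by (rule doubleton_in_edges_of)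
      then show ?thesis by blast
    next
      case 2
      then have "(vert i j, vert i' j') \<in> H94_column_order \<or> (vert i' j', vert i j) \<in> H94_column_order"
        using grid unfolding H94_column_order_def by (auto simp: neq_iff)
      then have "e \<in> edges_of H94_column_order" unfolding grid(1) by (rule doubleton_in_edges_of)
      then show ?thesis by blast
    qed
  next
    case pendant
    then have "(vert i j, pend i j) \<in> H94_pendant_order" unfolding H94_pendant_order_def by blast
    then have "e \<in> edges_of H94_pendant_order" unfolding pendant(1) by (simp add: doubleton_in_edges_of)
    then show ?thesis by blast
  qed
next
  fix e assume "e \<in> edges_of H94_row_order \<union> edges_of H94_column_order \<union> edges_of H94_pendant_order"
  then show "e \<in> H94_E"
    unfolding edges_of_def H94_row_order_def H94_column_order_def H94_pendant_order_def H94_E_def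
    by auto
qed

lemma H94_orders_edges_disjoint:
  "edges_of H94_row_order \<inter> edges_of H94_column_order = {}"
  "edges_of H94_row_order \<inter> edges_of H94_pendant_order = {}"
  "edges_of H94_column_order \<inter> edges_of H94_pendant_order = {}"
  unfolding edges_of_def H94_row_order_def H94_column_order_def H94_pendant_order_def
  by (auto simp: doubleton_eq_iff)

lemma H94_comparability_numbers:
  "comp_partition_number H94_E = 3 \<and> comp_cover_number H94_E = 3"
proof -
  define Fs where "Fs = (!) [edges_of H94_row_order, edges_of H94_column_order, edges_of H94_pendant_order]"
  have below_3: "(\<forall>i<3. P i) \<longleftrightarrow> P 0 \<and> P 1 \<and> P (2::nat)" for P
    by (auto simp: less_Suc_eq numeral_3_eq_3 numeral_2_eq_2)
  show ?thesis
  proof (rule comp_numbers_eqI)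
    show "\<forall>i<3. Fs i \<subseteq> H94_E \<and> comparability_edges (Fs i)"
      unfolding below_3 Fs_def H94_E_eq_edges_of_orders using comparability_edges_H94_orders by auto
    show "(\<Union>i<3. Fs i) = H94_E"
      unfolding Fs_def H94_E_eq_edges_of_orders by (simp add: lessThan_Suc numeral_3_eq_3 Un_ac)
    show "\<forall>i<3. \<forall>j<3. i \<noteq> j \<longrightarrow> Fs i \<inter> Fs j = {}"
      unfolding below_3 Fs_def using H94_orders_edges_disjoint by (simp add: Int_commute)
  qed (rule H94_no_small_comparability_cover)
qed

theorem proposition2:
  shows "perfect H94_V H94_E \<and> comp_partition_number H94_E = 3 \<and> comp_cover_number H94_E = 3"
  using perfect_H94 H94_comparability_numbers by blast

end
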